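(* Let $m\ge2$, $\sigma_0=\pm1$ if $m$ is odd and $\sigma_0=(-1)^{m/2}$ if $m$ is even. Let $u_0\in\mathcal{F}_n$ for some $n<\infty$, and let $u$ be the solution of the Cauchy problem $\partial_t u+\sigma_0\partial_x^m u=0$, $u(x,0)=u_0(x)$, $x\in\mathbb{R}$. For $\tau>0$ let $q=(q_0,\dots,q_{m-1})$ be the solution of the hyperbolic system $$\partial_t q_0+\sigma_0\partial_x q_{m-1}=0,\qquad \tau\partial_t q_i+\sum_{j=1}^{m-1}p^*_{ij}\,\partial_x q_{j-1}=\sum_{j=1}^{m-1}p^*_{ij}\,q_j\quad(i=1,\dots,m-1),$$ with initial data $q_j(x,0)=\partial_x^j u_0(x)$, $j=0,\dots,m-1$. Then for every fixed $T\in[0,\infty)$, $$\sup_{x\in\mathbb{R}}|q_0(x,T)-u(x,T)|=\mathcal{O}(\tau)\quad\text{as }\tau\to0^+.$$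
   Context: $\mathcal{F}_n=\{v(x)=\sum_{j=1}^n\hat v_j e^{ik_jx}:\ \hat v_j,k_j\in\mathbb{R}\}$. The matrix $P^*=(p^*_{ij})_{i,j=1}^{m-1}$ is defined by $p^*_{ij}=0$ if $i+j\ne m$, $p^*_{ij}=\sigma_0(-1)^{j-1}$ if $i+j=m$ and $j\le m/2$, and $p^*_{ij}=\sigma_0(-1)^{m-j}$ if $i+j=m$ and $j>m/2$. For initial data in $\mathcal{F}_n$, both problems are solved mode by mode: each Fourier mode $e^{ik_jx}$ evolves independently, $u$ via $\hat u(t)=e^{-\sigma_0 t(ik_j)^m}\hat u(0)$ and $q$ via the linear ODE system obtained by substituting $q(x,t)=\hat q(t)e^{ik_jx}$. *)

theory Defs
  imports "HOL-Analysis.Analysis"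
begin

definition pstar :: "real \<Rightarrow> nat \<Rightarrow> nat \<Rightarrow> nat \<Rightarrow> real" where
  "pstar \<sigma>0 m i j =
     (if i + j \<noteq> m then 0
      else if 2 * j \<le> m then \<sigma>0 * (-1) ^ (j - 1)
      else \<sigma>0 * (-1) ^ (m - j))"

text \<open>Mode-by-mode solution of the Cauchy problem u_t + sigma0 d_x^m u = 0.\<close>
definition usol :: "nat \<Rightarrow> real \<Rightarrow> nat \<Rightarrow> (nat \<Rightarrow> real) \<Rightarrow> (nat \<Rightarrow> real) \<Rightarrow> real \<Rightarrow> real \<Rightarrow> complex" where
  "usol m \<sigma>0 n vhat k x t =
     (\<Sum>j<n. exp (- complex_of_real (\<sigma>0 * t) * (\<i> * complex_of_real (k j)) ^ m) * complex_of_real (vhat j)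
             * exp (\<i> * complex_of_real (k j * x)))"

text \<open>Q (components l = 0..m-1, as functions of t) solves the linear ODE system obtained
  by substituting q_l(x,t) = Q l t * e^{i k x} into the hyperbolic relaxation system,
  with u0(x) = sum_{j<n} vhat_j e^{i k_j x} in F_n (vhat_j, k_j real) and initial data Q l 0 = (i k)^l * vhat (Fourier coefficient of d_x^l u0).\<close>
definition mode_sol :: "nat \<Rightarrow> real \<Rightarrow> real \<Rightarrow> real \<Rightarrow> real \<Rightarrow> (nat \<Rightarrow> real \<Rightarrow> complex) \<Rightarrow> bool" where
  "mode_sol m \<sigma>0 \<tau> k vh Q \<longleftrightarrow>
     (\<forall>l<m. Q l 0 = (\<i> * complex_of_real k) ^ l * complex_of_real vh) \<and>
     (\<forall>t\<ge>0.
        (Q 0 has_vector_derivative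
           (- complex_of_real \<sigma>0 * (\<i> * complex_of_real k) * Q (m - 1) t)) (at t within {0..}) \<and>
        (\<forall>i\<in>{1..m-1}.
           (Q i has_vector_derivative
              (((\<Sum>j=1..m-1. complex_of_real (pstar \<sigma>0 m i j) * Q j t)
                - (\<Sum>j=1..m-1. complex_of_real (pstar \<sigma>0 m i j) * (\<i> * complex_of_real k) * Q (j - 1) t))
               / complex_of_real \<tau>)) (at t within {0..})))"

end

theory Submission
  imports Defs
begin

text \<open>
  The Fourier modes evolve independently. For a mode with symbol a = \<i>k only the antidiagonal
  entries p i = p*(i, m - i) of P* survive, and the relaxation system becomes
  x0' = -\<sigma> a x(m-1),  \<tau> xi' = p i (x(m-i) - a x(m-1-i)).
  The weighted energy |x0|^2 + \<tau> \<Sum>(i\<ge>1) |xi|^2 is non-increasing: since Re a = 0 and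
  p i = p (m-1-i), the terms carrying a form an antisymmetric sum, and the remaining ones pair up
  through p i + p (m-i), which vanishes off the middle index and is nonpositive at it.

  The profile xl = a^l e^(ct) z with c = -\<sigma> a^m, whose component 0 is the exact mode of u, solves
  the stiff equations only up to residuals of order one; a corrector \<tau> \<gamma>l e^(ct) z reduces them to
  order \<tau>. Gronwall's inequality for the energy of the difference then bounds its component 0
  by O(\<tau>) on [0, T], and summing the finitely many modes, each multiplied by |e^(ikx)| = 1,
  gives the uniform bound.
\<close>

lemma gronwall_affine:
  fixes E E' :: "real \<Rightarrow> real" and c T :: real
  assumes "T \<ge> 0" and "c \<ge> 0"
    and der: "\<And>t. t \<in> {0..T} \<Longrightarrow> (E has_real_derivative E' t) (at t within {0..T})"
    and growth: "\<And>t. t \<in> {0..T} \<Longrightarrow> E' t \<le> E t + c"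
  shows "E T \<le> exp T * (E 0 + c * T)"
proof -
  define g where "g t = exp (- t) * E t - c * t" for t
  define g' where "g' t = exp (- t) * (E' t - E t) - c" for t
  have "(g has_real_derivative g' t) (at t within {0..T})" if "t \<in> {0..T}" for t
    unfolding g_def g'_def
    by (rule derivative_eq_intros der[OF that] refl | simp add: algebra_simps)+
  then obtain s where s: "s \<in> {0..T}" "g T - g 0 = g' s * (T - 0)"
    using mvt_very_simple[OF \<open>T \<ge> 0\<close>, of g "\<lambda>t x. g' t * x"]
    by (auto simp: has_field_derivative_def)
  have "exp (- s) * (E' s - E s) \<le> exp (- s) * c"
    using growth[OF s(1)] by (intro mult_left_mono) auto
  also have "\<dots> \<le> c"
    using s(1) \<open>c \<ge> 0\<close> by (intro mult_left_le_one_le) auto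
  finally have "g' s \<le> 0"
    by (simp add: g'_def)
  then have "g T \<le> g 0"
    using s(2) mult_nonpos_nonneg[OF _ \<open>T \<ge> 0\<close>] by fastforce
  then have "exp (- T) * E T \<le> E 0 + c * T"
    by (simp add: g_def)
  then show ?thesis
    by (simp add: exp_minus field_simps)
qed

definition dissipative_coupling :: "nat \<Rightarrow> (nat \<Rightarrow> real) \<Rightarrow> bool" where
  "dissipative_coupling m p \<longleftrightarrow>
     (\<forall>i<m. p (m - 1 - i) = p i) \<and>
     (\<forall>i\<in>{1..m-1}. p i + p (m - i) \<le> 0 \<and> (2 * i \<noteq> m \<longrightarrow> p i + p (m - i) = 0))"

lemma sum_antisymmetric_reflection_eq_0:
  fixes p :: "nat \<Rightarrow> real" and x :: "nat \<Rightarrow> complex" and a :: complex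
  assumes "Re a = 0" and "\<forall>i<m. p (m - 1 - i) = p i"
  shows "(\<Sum>l<m. p l * Re (cnj (x l) * a * x (m - 1 - l))) = 0"
proof -
  let ?V = "\<lambda>l. p l * Re (cnj (x l) * a * x (m - 1 - l))"
  have "(\<Sum>l<m. ?V l) = (\<Sum>l<m. ?V (m - 1 - l))"
    using sum.atLeastLessThan_rev[of ?V 0 m] by (simp add: lessThan_atLeast0)
  also have "\<dots> = (\<Sum>l<m. - ?V l)"
    using assms by (intro sum.cong) (auto simp: algebra_simps Suc_diff_Suc)
  finally show ?thesis by (simp add: sum_negf)
qed

lemma sum_reflection_pairing_nonpos:
  fixes p :: "nat \<Rightarrow> real" and x :: "nat \<Rightarrow> complex"
  assumes p: "\<forall>i\<in>{1..m-1}. p i + p (m - i) \<le> 0 \<and> (2 * i \<noteq> m \<longrightarrow> p i + p (m - i) = 0)"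
  shows "(\<Sum>i\<in>{1..m-1}. p i * Re (cnj (x i) * x (m - i))) \<le> 0"
proof -
  let ?R = "\<lambda>i. Re (cnj (x i) * x (m - i))"
  have "(\<Sum>i\<in>{1..m-1}. p i * ?R i) = (\<Sum>i\<in>{1..m-1}. p (m - i) * ?R (m - i))"
    by (rule sum.reindex_bij_witness[of _ "\<lambda>i. m - i" "\<lambda>i. m - i"]) auto
  also have "\<dots> = (\<Sum>i\<in>{1..m-1}. p (m - i) * ?R i)"
    by (intro sum.cong) (auto simp: algebra_simps Suc_diff_le)
  finally have "2 * (\<Sum>i\<in>{1..m-1}. p i * ?R i) = (\<Sum>i\<in>{1..m-1}. (p i + p (m - i)) * ?R i)"
    by (simp add: distrib_right sum.distrib)
  also have "\<dots> \<le> 0"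
  proof (rule sum_nonpos)
    fix i assume i: "i \<in> {1..m-1}"
    show "(p i + p (m - i)) * ?R i \<le> 0"
    proof (cases "2 * i = m")
      case True
      then have "m - i = i" by simp
      then have "?R i \<ge> 0" by simp
      then show ?thesis using p i by (simp add: mult_nonpos_nonneg)
    qed (use p i in simp)
  qed
  finally show ?thesis by simp
qed

text \<open>One Fourier mode of the relaxation system: a stands for the derivative in x, p l for the only
  nonzero entry p*(l, m - l) of row l of P*, and p 0 for \<sigma>0.\<close>

definition relaxation_rhs ::
    "nat \<Rightarrow> (nat \<Rightarrow> real) \<Rightarrow> complex \<Rightarrow> real \<Rightarrow> (nat \<Rightarrow> complex) \<Rightarrow> nat \<Rightarrow> complex" where
  "relaxation_rhs m p a \<tau> x l =
     (if l = 0 then - of_real (p 0) * a * x (m - 1)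
      else of_real (p l) * (x (m - l) - a * x (m - 1 - l)) / of_real \<tau>)"

definition relaxation_system ::
    "nat \<Rightarrow> (nat \<Rightarrow> real) \<Rightarrow> complex \<Rightarrow> real \<Rightarrow> (nat \<Rightarrow> real \<Rightarrow> complex) \<Rightarrow> (nat \<Rightarrow> real \<Rightarrow> complex) \<Rightarrow> bool" where
  "relaxation_system m p a \<tau> f x \<longleftrightarrow>
     (\<forall>t\<ge>0. \<forall>l<m. (x l has_vector_derivative relaxation_rhs m p a \<tau> (\<lambda>j. x j t) l + f l t) (at t within {0..}))"

definition relaxation_energy :: "nat \<Rightarrow> real \<Rightarrow> (nat \<Rightarrow> complex) \<Rightarrow> real" where
  "relaxation_energy m \<tau> x = (\<Sum>l<m. (if l = 0 then 1 else \<tau>) * (cmod (x l))\<^sup>2)"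

lemma relaxation_rhs_diff:
  "relaxation_rhs m p a \<tau> (\<lambda>j. x j - y j) l = relaxation_rhs m p a \<tau> x l - relaxation_rhs m p a \<tau> y l"
  by (cases "l = 0") (simp_all add: relaxation_rhs_def ring_distribs diff_divide_distrib)

lemma relaxation_rhs_dissipative:
  fixes x :: "nat \<Rightarrow> complex"
  assumes p: "dissipative_coupling m p" and "Re a = 0" and "m \<ge> 1" and "\<tau> > 0"
  shows "(\<Sum>l<m. (if l = 0 then 1 else \<tau>) * Re (cnj (x l) * relaxation_rhs m p a \<tau> x l)) \<le> 0"
proof -
  define V where "V l = p l * Re (cnj (x l) * a * x (m - 1 - l))" for l
  define U where "U i = p i * Re (cnj (x i) * x (m - i))" for i
  have split: "{..<m} = insert 0 {1..m-1}"
    using \<open>m \<ge> 1\<close> by auto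
  have "(\<Sum>l<m. V l) = V 0 + (\<Sum>i\<in>{1..m-1}. V i)"
    by (simp add: split)
  moreover have "(\<Sum>l<m. (if l = 0 then 1 else \<tau>) * Re (cnj (x l) * relaxation_rhs m p a \<tau> x l))
      = - V 0 + (\<Sum>i\<in>{1..m-1}. U i - V i)"
  proof -
    have "\<tau> * Re (cnj (x i) * relaxation_rhs m p a \<tau> x i) = U i - V i" if "i \<ge> 1" for i
    proof -
      let ?z = "cnj (x i) * (of_real (p i) * (x (m - i) - a * x (m - 1 - i)))"
      have "\<tau> * Re (cnj (x i) * relaxation_rhs m p a \<tau> x i) = \<tau> * Re (?z / of_real \<tau>)"
        using that by (simp add: relaxation_rhs_def)
      also have "\<dots> = Re ?z"
        using \<open>\<tau> > 0\<close> by (simp add: Re_divide_of_real)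
      also have "\<dots> = U i - V i"
        by (simp add: U_def V_def algebra_simps)
      finally show ?thesis .
    qed
    moreover have "Re (cnj (x 0) * relaxation_rhs m p a \<tau> x 0) = - V 0"
      by (simp add: relaxation_rhs_def V_def algebra_simps)
    ultimately show ?thesis
      by (simp add: split)
  qed
  moreover have "(\<Sum>l<m. V l) = 0" "(\<Sum>i\<in>{1..m-1}. U i) \<le> 0"
    using p sum_antisymmetric_reflection_eq_0[OF \<open>Re a = 0\<close>, of m p x]
      sum_reflection_pairing_nonpos[of m p x]
    by (auto simp: dissipative_coupling_def U_def V_def)
  ultimately show ?thesis
    by (simp add: sum_subtractf)
qed

lemma relaxation_energy_has_derivative:
  assumes "\<And>l. l < m \<Longrightarrow> (x l has_vector_derivative x' l) (at t within S)"
  shows "((\<lambda>t. relaxation_energy m \<tau> (\<lambda>l. x l t)) has_real_derivative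
            (\<Sum>l<m. (if l = 0 then 1 else \<tau>) * (2 * Re (cnj (x l t) * x' l)))) (at t within S)"
proof -
  have energy_Re: "relaxation_energy m \<tau> (\<lambda>l. x l t) =
      Re (\<Sum>l<m. of_real (if l = 0 then 1 else \<tau>) * (cnj (x l t) * x l t))" for t
    by (simp add: relaxation_energy_def Re_sum cmod_power2, simp add: power2_eq_square)
  have "((\<lambda>t. \<Sum>l<m. of_real (if l = 0 then 1 else \<tau>) * (cnj (x l t) * x l t)) has_vector_derivative
          (\<Sum>l<m. of_real (if l = 0 then 1 else \<tau>) * (cnj (x l t) * x' l + cnj (x' l) * x l t))) (at t within S)"
    by (intro has_vector_derivative_sum has_vector_derivative_mult_right has_vector_derivative_mult
          has_vector_derivative_cnj assms) auto
  then show ?thesis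
    by (simp add: has_vector_derivative_complex_iff energy_Re Re_sum algebra_simps)
qed

lemma norm_sq_le_relaxation_energy:
  assumes "m \<ge> 1" and "\<tau> \<ge> 0"
  shows "(cmod (x 0))\<^sup>2 \<le> relaxation_energy m \<tau> x"
  unfolding relaxation_energy_def
  using member_le_sum[of 0 "{..<m}" "\<lambda>l. (if l = 0 then 1 else \<tau>) * (cmod (x l))\<^sup>2"] assms
  by simp

lemma relaxation_energy_le_sum_norm_sq:
  assumes "0 \<le> \<tau>" and "\<tau> \<le> 1"
  shows "relaxation_energy m \<tau> x \<le> (\<Sum>l<m. (cmod (x l))\<^sup>2)"
  unfolding relaxation_energy_def
  using assms by (intro sum_mono) (simp add: mult_left_le_one_le)

lemma relaxation_energy_production_le:
  fixes x f :: "nat \<Rightarrow> complex"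
  assumes p: "dissipative_coupling m p" and "Re a = 0" and "m \<ge> 1" and \<tau>: "0 < \<tau>" "\<tau> \<le> 1"
    and f: "\<And>l. l < m \<Longrightarrow> cmod (f l) \<le> F"
  shows "(\<Sum>l<m. (if l = 0 then 1 else \<tau>) * (2 * Re (cnj (x l) * (relaxation_rhs m p a \<tau> x l + f l))))
           \<le> relaxation_energy m \<tau> x + real m * F\<^sup>2"
proof -
  let ?h = "\<lambda>l::nat. if l = 0 then 1 else \<tau>"
  have two_Re_le: "2 * Re (cnj y * z) \<le> (cmod y)\<^sup>2 + (cmod z)\<^sup>2" for y z :: complex
    using complex_Re_le_cmod[of "cnj y * z"] sum_squares_bound[of "cmod y" "cmod z"]
    by (simp add: norm_mult)
  have "(\<Sum>l<m. ?h l * (2 * Re (cnj (x l) * (relaxation_rhs m p a \<tau> x l + f l))))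
      = 2 * (\<Sum>l<m. ?h l * Re (cnj (x l) * relaxation_rhs m p a \<tau> x l))
        + (\<Sum>l<m. ?h l * (2 * Re (cnj (x l) * f l)))"
    by (simp add: ring_distribs sum.distrib sum_distrib_left mult.left_commute)
  also have "\<dots> \<le> 0 + (\<Sum>l<m. ?h l * ((cmod (x l))\<^sup>2 + (cmod (f l))\<^sup>2))"
  proof (rule add_mono)
    show "2 * (\<Sum>l<m. ?h l * Re (cnj (x l) * relaxation_rhs m p a \<tau> x l)) \<le> 0"
      using relaxation_rhs_dissipative[OF p \<open>Re a = 0\<close> \<open>m \<ge> 1\<close> \<open>\<tau> > 0\<close>] by simp
    show "(\<Sum>l<m. ?h l * (2 * Re (cnj (x l) * f l))) \<le> (\<Sum>l<m. ?h l * ((cmod (x l))\<^sup>2 + (cmod (f l))\<^sup>2))"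
      using \<tau> by (intro sum_mono mult_left_mono two_Re_le) simp
  qed
  also have "\<dots> = relaxation_energy m \<tau> x + (\<Sum>l<m. ?h l * (cmod (f l))\<^sup>2)"
    by (simp add: relaxation_energy_def ring_distribs sum.distrib)
  also have "(\<Sum>l<m. ?h l * (cmod (f l))\<^sup>2) \<le> (\<Sum>l<m. F\<^sup>2)"
  proof (rule sum_mono)
    fix l assume "l \<in> {..<m}"
    then have "(cmod (f l))\<^sup>2 \<le> F\<^sup>2"
      using f by (intro power_mono) auto
    moreover have "0 \<le> ?h l" "?h l \<le> 1"
      using \<tau> by auto
    ultimately show "?h l * (cmod (f l))\<^sup>2 \<le> F\<^sup>2"
      by (meson mult_left_le_one_le order_trans zero_le_power2)
  qed
  finally show ?thesis by simp
qed

lemma relaxation_energy_bound: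
  assumes p: "dissipative_coupling m p" and "Re a = 0" and "m \<ge> 1" and \<tau>: "0 < \<tau>" "\<tau> \<le> 1"
    and "T \<ge> 0" and sys: "relaxation_system m p a \<tau> f x"
    and f: "\<And>t l. t \<in> {0..T} \<Longrightarrow> l < m \<Longrightarrow> cmod (f l t) \<le> F"
  shows "relaxation_energy m \<tau> (\<lambda>l. x l T)
           \<le> exp T * (relaxation_energy m \<tau> (\<lambda>l. x l 0) + real m * F\<^sup>2 * T)"
proof (rule gronwall_affine)
  let ?rhs = "\<lambda>t. relaxation_rhs m p a \<tau> (\<lambda>j. x j t)"
  define E' where
    "E' t = (\<Sum>l<m. (if l = 0 then 1 else \<tau>) * (2 * Re (cnj (x l t) * (?rhs t l + f l t))))" for t
  show "((\<lambda>t. relaxation_energy m \<tau> (\<lambda>l. x l t)) has_real_derivative E' t) (at t within {0..T})"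
    if "t \<in> {0..T}" for t
    unfolding E'_def
  proof (rule relaxation_energy_has_derivative)
    fix l assume "l < m"
    then have "(x l has_vector_derivative ?rhs t l + f l t) (at t within {0..})"
      using sys that by (simp add: relaxation_system_def)
    then show "(x l has_vector_derivative ?rhs t l + f l t) (at t within {0..T})"
      by (rule has_vector_derivative_within_subset) auto
  qed
  show "E' t \<le> relaxation_energy m \<tau> (\<lambda>l. x l t) + real m * F\<^sup>2" if "t \<in> {0..T}" for t
    unfolding E'_def using f[OF that]
    by (intro relaxation_energy_production_le[OF p \<open>Re a = 0\<close> \<open>m \<ge> 1\<close> \<tau>])
  show "0 \<le> real m * F\<^sup>2"
    by simp
qed (fact \<open>T \<ge> 0\<close>)

fun relaxation_corrector :: "(nat \<Rightarrow> real) \<Rightarrow> nat \<Rightarrow> complex \<Rightarrow> complex \<Rightarrow> nat \<Rightarrow> complex" where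
  "relaxation_corrector p m a c 0 = 0"
| "relaxation_corrector p m a c (Suc j) =
     a * relaxation_corrector p m a c j + a ^ (m - Suc j) * c / of_real (p (m - Suc j))"

lemma relaxation_corrector_antidiagonal:
  assumes "i \<in> {1..m-1}" and "p i \<noteq> 0"
  shows "of_real (p i) * (relaxation_corrector p m a c (m - i) - a * relaxation_corrector p m a c (m - 1 - i))
           = a ^ i * c"
proof -
  have "m - i = Suc (m - 1 - i)" "m - Suc (m - 1 - i) = i"
    using assms(1) by auto
  then show ?thesis
    using assms(2) by (simp only: relaxation_corrector.simps) (simp add: field_simps)
qed

lemma relaxation_corrector_residual:
  fixes p :: "nat \<Rightarrow> real" and m :: nat and a c z :: complex
  defines "\<gamma> \<equiv> relaxation_corrector p m a c"
  assumes "m \<ge> 1" and "\<tau> > 0" and "l < m" and pnz: "\<forall>i<m. p i \<noteq> 0"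
    and c: "c = - of_real (p 0) * a ^ m"
  shows "relaxation_rhs m p a \<tau> (\<lambda>j. (a ^ j + of_real \<tau> * \<gamma> j) * z) l - (a ^ l + of_real \<tau> * \<gamma> l) * (c * z)
           = - of_real \<tau> * (if l = 0 then of_real (p 0) * a * \<gamma> (m - 1) else \<gamma> l * c) * z"
proof (cases "l = 0")
  case True
  have "a ^ m = a * a ^ (m - 1)"
    using \<open>m \<ge> 1\<close> by (simp flip: power_Suc)
  then show ?thesis
    using True by (simp add: relaxation_rhs_def \<gamma>_def c algebra_simps)
next
  case False
  then have i: "l \<in> {1..m-1}"
    using \<open>l < m\<close> by auto
  have "m - l = Suc (m - 1 - l)"
    using i by auto
  then have "a ^ (m - l) = a * a ^ (m - 1 - l)"
    by simp
  then have "of_real (p l) * ((a ^ (m - l) + of_real \<tau> * \<gamma> (m - l)) * z - a * ((a ^ (m - 1 - l) + of_real \<tau> * \<gamma> (m - 1 - l)) * z))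
      = of_real \<tau> * (a ^ l * c * z)"
    using relaxation_corrector_antidiagonal[OF i, of p a c] pnz \<open>l < m\<close>
    by (simp add: \<gamma>_def algebra_simps)
  then show ?thesis
    using False \<open>\<tau> > 0\<close> by (simp add: relaxation_rhs_def algebra_simps)
qed

lemma relaxation_system_error:
  fixes p :: "nat \<Rightarrow> real" and m :: nat and a c z :: complex and Q :: "nat \<Rightarrow> real \<Rightarrow> complex"
  defines "\<gamma> \<equiv> relaxation_corrector p m a c"
  assumes sys: "relaxation_system m p a \<tau> (\<lambda>_ _. 0) Q"
    and "m \<ge> 1" and "\<tau> > 0" and pnz: "\<forall>i<m. p i \<noteq> 0" and c: "c = - of_real (p 0) * a ^ m"
  shows "relaxation_system m p a \<tau>
           (\<lambda>l t. - of_real \<tau> * (if l = 0 then of_real (p 0) * a * \<gamma> (m - 1) else \<gamma> l * c) * (exp (t *\<^sub>R c) * z))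
           (\<lambda>l t. Q l t - (a ^ l + of_real \<tau> * \<gamma> l) * (exp (t *\<^sub>R c) * z))"
  unfolding relaxation_system_def
proof (intro allI impI)
  fix t :: real and l assume "t \<ge> 0" "l < m"
  let ?w = "\<lambda>t. exp (t *\<^sub>R c) * z"
  let ?v = "\<lambda>j. (a ^ j + of_real \<tau> * \<gamma> j) * ?w t"
  have "(?w has_vector_derivative c * ?w t) (at t within {0..})"
    by (rule has_vector_derivative_eq_rhs[OF has_vector_derivative_mult_left[OF
          exp_scaleR_has_vector_derivative_right]]) (simp add: mult_ac)
  moreover have "(Q l has_vector_derivative relaxation_rhs m p a \<tau> (\<lambda>j. Q j t) l) (at t within {0..})"
    using sys \<open>t \<ge> 0\<close> \<open>l < m\<close> by (simp add: relaxation_system_def)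
  ultimately have "((\<lambda>t. Q l t - (a ^ l + of_real \<tau> * \<gamma> l) * ?w t) has_vector_derivative
      relaxation_rhs m p a \<tau> (\<lambda>j. Q j t) l - (a ^ l + of_real \<tau> * \<gamma> l) * (c * ?w t)) (at t within {0..})"
    by (intro has_vector_derivative_diff has_vector_derivative_mult_right)
  also have "relaxation_rhs m p a \<tau> (\<lambda>j. Q j t) l - (a ^ l + of_real \<tau> * \<gamma> l) * (c * ?w t)
      = relaxation_rhs m p a \<tau> (\<lambda>j. Q j t - ?v j) l
        + (relaxation_rhs m p a \<tau> ?v l - (a ^ l + of_real \<tau> * \<gamma> l) * (c * ?w t))"
    by (simp add: relaxation_rhs_diff)
  finally show "((\<lambda>t. Q l t - (a ^ l + of_real \<tau> * \<gamma> l) * ?w t) has_vector_derivative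
      relaxation_rhs m p a \<tau> (\<lambda>j. Q j t - (a ^ j + of_real \<tau> * \<gamma> j) * ?w t) l
      + - of_real \<tau> * (if l = 0 then of_real (p 0) * a * \<gamma> (m - 1) else \<gamma> l * c) * ?w t) (at t within {0..})"
    unfolding \<gamma>_def relaxation_corrector_residual[OF \<open>m \<ge> 1\<close> \<open>\<tau> > 0\<close> \<open>l < m\<close> pnz c] .
qed

lemma norm_mult_exp_scaleR_le:
  fixes c w z :: complex
  assumes "t \<in> {0..T}"
  shows "cmod (w * (exp (t *\<^sub>R c) * z)) \<le> cmod w * (exp (T * cmod c) * cmod z)"
proof -
  have "t * Re c \<le> t * cmod c"
    using assms complex_Re_le_cmod[of c] by (intro mult_left_mono) auto
  also have "\<dots> \<le> T * cmod c"
    using assms by (intro mult_right_mono) auto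
  finally show ?thesis
    by (simp add: norm_mult mult_left_mono mult_right_mono)
qed

lemma relaxation_approximation:
  fixes p :: "nat \<Rightarrow> real" and m :: nat and a z :: complex
  assumes p: "dissipative_coupling m p" and pnz: "\<forall>i<m. p i \<noteq> 0"
    and "Re a = 0" and "m \<ge> 1" and "T \<ge> 0"
  shows "\<exists>C. \<forall>\<tau> Q. 0 < \<tau> \<and> \<tau> \<le> 1 \<and> relaxation_system m p a \<tau> (\<lambda>_ _. 0) Q \<and> (\<forall>l<m. Q l 0 = a ^ l * z)
           \<longrightarrow> cmod (Q 0 T - exp (T *\<^sub>R (- of_real (p 0) * a ^ m)) * z) \<le> C * \<tau>"
proof -
  define c where "c = - of_real (p 0) * a ^ m"
  define \<gamma> where "\<gamma> = relaxation_corrector p m a c"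
  define g where "g l = (if l = 0 then of_real (p 0) * a * \<gamma> (m - 1) else \<gamma> l * c)" for l
  define B where "B = (\<Sum>l<m. cmod (g l)) * (exp (T * cmod c) * cmod z)"
  define G where "G = (\<Sum>l<m. (cmod (\<gamma> l * z))\<^sup>2)"
  define K where "K = exp T * (G + real m * B\<^sup>2 * T)"
  have "K \<ge> 0"
    using \<open>T \<ge> 0\<close> by (simp add: K_def G_def sum_nonneg)
  have "cmod (Q 0 T - exp (T *\<^sub>R c) * z) \<le> sqrt K * \<tau>"
    if \<tau>: "0 < \<tau>" "\<tau> \<le> 1" and sys: "relaxation_system m p a \<tau> (\<lambda>_ _. 0) Q"
      and init: "\<forall>l<m. Q l 0 = a ^ l * z" for \<tau> Q
  proof -
    define d where "d l t = Q l t - (a ^ l + of_real \<tau> * \<gamma> l) * (exp (t *\<^sub>R c) * z)" for l t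
    define f where "f l t = - of_real \<tau> * g l * (exp (t *\<^sub>R c) * z)" for l t
    have err: "relaxation_system m p a \<tau> f d"
      unfolding d_def f_def g_def \<gamma>_def
      using relaxation_system_error[OF sys \<open>m \<ge> 1\<close> \<open>\<tau> > 0\<close> pnz c_def] .
    have f_bound: "cmod (f l t) \<le> \<tau> * B" if "t \<in> {0..T}" "l < m" for t l
    proof -
      have "cmod (g l * (exp (t *\<^sub>R c) * z)) \<le> cmod (g l) * (exp (T * cmod c) * cmod z)"
        using that(1) by (rule norm_mult_exp_scaleR_le)
      also have "\<dots> \<le> B"
        unfolding B_def using \<open>l < m\<close> by (intro mult_right_mono member_le_sum) auto
      finally show ?thesis
        using \<tau> by (simp add: f_def norm_mult mult.assoc mult_left_mono)
    qed
    have "relaxation_energy m \<tau> (\<lambda>l. d l 0) \<le> (\<Sum>l<m. (cmod (d l 0))\<^sup>2)"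
      using \<tau> by (intro relaxation_energy_le_sum_norm_sq) auto
    also have "\<dots> = \<tau>\<^sup>2 * G"
      using init \<tau> by (simp add: d_def G_def sum_distrib_left norm_mult power_mult_distrib algebra_simps)
    finally have E0: "relaxation_energy m \<tau> (\<lambda>l. d l 0) \<le> \<tau>\<^sup>2 * G" .
    have "(cmod (d 0 T))\<^sup>2 \<le> relaxation_energy m \<tau> (\<lambda>l. d l T)"
      using \<open>m \<ge> 1\<close> \<tau> by (intro norm_sq_le_relaxation_energy) auto
    also have "\<dots> \<le> exp T * (relaxation_energy m \<tau> (\<lambda>l. d l 0) + real m * (\<tau> * B)\<^sup>2 * T)"
      using relaxation_energy_bound[OF p \<open>Re a = 0\<close> \<open>m \<ge> 1\<close> \<tau> \<open>T \<ge> 0\<close> err f_bound] .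
    also have "\<dots> \<le> exp T * (\<tau>\<^sup>2 * G + real m * (\<tau> * B)\<^sup>2 * T)"
      using E0 by simp
    also have "\<dots> = \<tau>\<^sup>2 * K"
      by (simp add: K_def power_mult_distrib algebra_simps)
    also have "\<dots> = (sqrt K * \<tau>)\<^sup>2"
      using \<open>K \<ge> 0\<close> by (simp add: power_mult_distrib)
    finally have "cmod (d 0 T) \<le> sqrt K * \<tau>"
      by (rule power2_le_imp_le) (use \<tau> \<open>K \<ge> 0\<close> in simp)
    then show ?thesis
      by (simp add: d_def \<gamma>_def)
  qed
  then show ?thesis
    unfolding c_def by blast
qed

lemma pstar_antidiagonal:
  "i < m \<Longrightarrow> pstar \<sigma> m i (m - i) = \<sigma> * (-1) ^ (if m \<le> 2 * i then m - 1 - i else i)"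
  by (auto simp: pstar_def)

lemma sum_pstar_row:
  fixes F :: "nat \<Rightarrow> complex"
  assumes "i \<in> {1..m-1}"
  shows "(\<Sum>j=1..m-1. of_real (pstar \<sigma> m i j) * F j) = of_real (pstar \<sigma> m i (m - i)) * F (m - i)"
proof -
  have "(\<Sum>j=1..m-1. of_real (pstar \<sigma> m i j) * F j)
      = (\<Sum>j=1..m-1. if j = m - i then of_real (pstar \<sigma> m i (m - i)) * F (m - i) else 0)"
    using assms by (intro sum.cong) (auto simp: pstar_def)
  also have "\<dots> = of_real (pstar \<sigma> m i (m - i)) * F (m - i)"
  proof -
    have "m - i \<in> {1..m-1}"
      using assms by auto
    then show ?thesis by simp
  qed
  finally show ?thesis .
qed

lemma pstar_antidiagonal_reflect:
  assumes "i < m"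
  shows "pstar \<sigma> m (m - 1 - i) (m - (m - 1 - i)) = pstar \<sigma> m i (m - i)"
proof -
  have exponent: "(if m \<le> 2 * (m - 1 - i) then m - 1 - (m - 1 - i) else m - 1 - i)
      = (if m \<le> 2 * i then m - 1 - i else i)"
    using assms by auto
  have "pstar \<sigma> m (m - 1 - i) (m - (m - 1 - i))
      = \<sigma> * (-1) ^ (if m \<le> 2 * (m - 1 - i) then m - 1 - (m - 1 - i) else m - 1 - i)"
    using assms by (intro pstar_antidiagonal) simp
  then show ?thesis
    unfolding exponent pstar_antidiagonal[OF assms] .
qed

lemma dissipative_coupling_pstar:
  assumes "m \<ge> 2" and \<sigma>: "even m \<Longrightarrow> \<sigma> = (-1) ^ (m div 2)"
  shows "dissipative_coupling m (\<lambda>i. pstar \<sigma> m i (m - i))"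
  unfolding dissipative_coupling_def
proof (rule conjI; intro allI ballI impI)
  fix i assume "i < m"
  then show "pstar \<sigma> m (m - 1 - i) (m - (m - 1 - i)) = pstar \<sigma> m i (m - i)"
    by (rule pstar_antidiagonal_reflect)
next
  fix i assume i: "i \<in> {1..m-1}"
  have A: "pstar \<sigma> m i (m - i) = \<sigma> * (-1) ^ (if m \<le> 2 * i then m - 1 - i else i)"
    using i by (intro pstar_antidiagonal) auto
  have "pstar \<sigma> m (m - i) (m - (m - i))
      = \<sigma> * (-1) ^ (if m \<le> 2 * (m - i) then m - 1 - (m - i) else m - i)"
    using i by (intro pstar_antidiagonal) auto
  also have "(if m \<le> 2 * (m - i) then m - 1 - (m - i) else m - i) = (if 2 * i \<le> m then i - 1 else m - i)"
    using i by auto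
  finally have B: "pstar \<sigma> m (m - i) (m - (m - i)) = \<sigma> * (-1) ^ (if 2 * i \<le> m then i - 1 else m - i)" .
  obtain j where j: "i = Suc j"
    using i by (cases i) auto
  consider "2 * i < m" | "2 * i = m" | "2 * i > m"
    by linarith
  then show "pstar \<sigma> m i (m - i) + pstar \<sigma> m (m - i) (m - (m - i)) \<le> 0 \<and>
      (2 * i \<noteq> m \<longrightarrow> pstar \<sigma> m i (m - i) + pstar \<sigma> m (m - i) (m - (m - i)) = 0)"
  proof cases
    case 1
    then show ?thesis
      unfolding A B using j by simp
  next
    case 2
    then have "\<sigma> = (-1) ^ Suc j" and "m - 1 - i = j"
      using \<sigma> j by auto
    then show ?thesis
      using 2 j unfolding A B by simp
  next
    case 3
    obtain k where "m - i = Suc k" "m - 1 - i = k"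
      using i by (cases "m - i") auto
    then show ?thesis
      using 3 unfolding A B by simp
  qed
qed

lemma mode_sol_relaxation_system:
  assumes "m \<ge> 2" and Q: "mode_sol m \<sigma> \<tau> k vh Q"
  shows "relaxation_system m (\<lambda>i. pstar \<sigma> m i (m - i)) (\<i> * of_real k) \<tau> (\<lambda>_ _. 0) Q"
  unfolding relaxation_system_def
proof (intro allI impI)
  fix t :: real and l assume "t \<ge> 0" "l < m"
  show "(Q l has_vector_derivative
      relaxation_rhs m (\<lambda>i. pstar \<sigma> m i (m - i)) (\<i> * of_real k) \<tau> (\<lambda>j. Q j t) l + 0) (at t within {0..})"
  proof (cases "l = 0")
    case True
    have "pstar \<sigma> m 0 m = \<sigma>"
      using \<open>m \<ge> 2\<close> by (simp add: pstar_def)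
    then show ?thesis
      using Q \<open>t \<ge> 0\<close> True by (simp add: mode_sol_def relaxation_rhs_def mult.assoc)
  next
    case False
    then have l: "l \<in> {1..m-1}"
      using \<open>l < m\<close> by auto
    let ?a = "\<i> * of_real k"
    have "(Q l has_vector_derivative
        ((\<Sum>j=1..m-1. of_real (pstar \<sigma> m l j) * Q j t)
          - (\<Sum>j=1..m-1. of_real (pstar \<sigma> m l j) * (?a * Q (j - 1) t))) / of_real \<tau>) (at t within {0..})"
      using Q \<open>t \<ge> 0\<close> l unfolding mode_sol_def by (simp add: mult.assoc)
    moreover have "m - l - 1 = m - 1 - l"
      by simp
    ultimately show ?thesis
      using False unfolding sum_pstar_row[OF l] by (simp add: relaxation_rhs_def right_diff_distrib)
  qed
qed

lemma mode_sol_approximation: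
  fixes m :: nat and \<sigma> T k vh :: real
  assumes "m \<ge> 2" and \<sigma>_odd: "odd m \<Longrightarrow> \<sigma> = 1 \<or> \<sigma> = -1"
    and \<sigma>_even: "even m \<Longrightarrow> \<sigma> = (-1) ^ (m div 2)" and "T \<ge> 0"
  shows "\<exists>C. \<forall>\<tau> Q. 0 < \<tau> \<and> \<tau> \<le> 1 \<and> mode_sol m \<sigma> \<tau> k vh Q \<longrightarrow>
           cmod (Q 0 T - exp (- of_real (\<sigma> * T) * (\<i> * of_real k) ^ m) * of_real vh) \<le> C * \<tau>"
proof -
  let ?p = "\<lambda>i. pstar \<sigma> m i (m - i)"
  have "\<sigma> \<noteq> 0"
    using \<sigma>_odd \<sigma>_even by (cases "even m") auto
  then have pnz: "\<forall>i<m. ?p i \<noteq> 0"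
    by (simp add: pstar_antidiagonal)
  have p0: "pstar \<sigma> m 0 m = \<sigma>"
    using \<open>m \<ge> 2\<close> by (simp add: pstar_def)
  have "Re (\<i> * of_real k) = 0" and "m \<ge> 1"
    using \<open>m \<ge> 2\<close> by simp_all
  then obtain C where C: "\<forall>\<tau> Q. 0 < \<tau> \<and> \<tau> \<le> 1 \<and> relaxation_system m ?p (\<i> * of_real k) \<tau> (\<lambda>_ _. 0) Q
      \<and> (\<forall>l<m. Q l 0 = (\<i> * of_real k) ^ l * of_real vh) \<longrightarrow>
      cmod (Q 0 T - exp (T *\<^sub>R (- of_real \<sigma> * (\<i> * of_real k) ^ m)) * of_real vh) \<le> C * \<tau>"
    using relaxation_approximation[OF dissipative_coupling_pstar[OF \<open>m \<ge> 2\<close> \<sigma>_even] pnz _ _ \<open>T \<ge> 0\<close>,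
        where z = "of_real vh"]
    unfolding diff_zero p0 by blast
  have exponent: "T *\<^sub>R (- of_real \<sigma> * (\<i> * of_real k) ^ m) = - of_real (\<sigma> * T) * (\<i> * of_real k) ^ m"
    by (simp add: scaleR_conv_of_real)
  show ?thesis
  proof (intro exI allI impI)
    fix \<tau> Q assume H: "0 < \<tau> \<and> \<tau> \<le> 1 \<and> mode_sol m \<sigma> \<tau> k vh Q"
    then have "relaxation_system m ?p (\<i> * of_real k) \<tau> (\<lambda>_ _. 0) Q"
      using mode_sol_relaxation_system[OF \<open>m \<ge> 2\<close>] by blast
    moreover have "\<forall>l<m. Q l 0 = (\<i> * of_real k) ^ l * of_real vh"
      using H by (simp add: mode_sol_def)
    ultimately show "cmod (Q 0 T - exp (- of_real (\<sigma> * T) * (\<i> * of_real k) ^ m) * of_real vh) \<le> C * \<tau>"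
      using C H unfolding exponent by blast
  qed
qed

theorem theorem3:
  fixes m n :: nat and \<sigma>0 T :: real and vhat :: "nat \<Rightarrow> real" and k :: "nat \<Rightarrow> real"
  assumes "m \<ge> 2"
    and "odd m \<Longrightarrow> \<sigma>0 = 1 \<or> \<sigma>0 = -1"
    and "even m \<Longrightarrow> \<sigma>0 = (-1) ^ (m div 2)"
    and "T \<ge> 0"
  shows "\<exists>C \<tau>0. \<tau>0 > 0 \<and>
           (\<forall>\<tau>. 0 < \<tau> \<and> \<tau> < \<tau>0 \<longrightarrow>
              (\<forall>Q :: nat \<Rightarrow> nat \<Rightarrow> real \<Rightarrow> complex.
                 (\<forall>j<n. mode_sol m \<sigma>0 \<tau> (k j) (vhat j) (Q j)) \<longrightarrow>
                 (\<forall>x::real. cmod ((\<Sum>j<n. Q j 0 T * exp (\<i> * complex_of_real (k j * x)))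
                                    - usol m \<sigma>0 n vhat k x T) \<le> C * \<tau>)))"
proof -
  let ?u = "\<lambda>j. exp (- complex_of_real (\<sigma>0 * T) * (\<i> * complex_of_real (k j)) ^ m) * complex_of_real (vhat j)"
  have "\<exists>C. \<forall>\<tau> Q. 0 < \<tau> \<and> \<tau> \<le> 1 \<and> mode_sol m \<sigma>0 \<tau> (k j) (vhat j) Q \<longrightarrow>
      cmod (Q 0 T - ?u j) \<le> C * \<tau>" for j
    by (rule mode_sol_approximation) (use assms in auto)
  then obtain C where C: "\<And>j \<tau> Q. 0 < \<tau> \<Longrightarrow> \<tau> \<le> 1 \<Longrightarrow> mode_sol m \<sigma>0 \<tau> (k j) (vhat j) Q \<Longrightarrow>
      cmod (Q 0 T - ?u j) \<le> C j * \<tau>"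
    by metis
  have "cmod ((\<Sum>j<n. Q j 0 T * exp (\<i> * of_real (k j * x))) - usol m \<sigma>0 n vhat k x T) \<le> (\<Sum>j<n. C j) * \<tau>"
    if "0 < \<tau>" "\<tau> < 1" and Q: "\<forall>j<n. mode_sol m \<sigma>0 \<tau> (k j) (vhat j) (Q j)" for \<tau> Q x
  proof -
    have "(\<Sum>j<n. Q j 0 T * exp (\<i> * of_real (k j * x))) - usol m \<sigma>0 n vhat k x T
        = (\<Sum>j<n. (Q j 0 T - ?u j) * exp (\<i> * of_real (k j * x)))"
      by (simp add: usol_def left_diff_distrib sum_subtractf)
    also have "cmod \<dots> \<le> (\<Sum>j<n. cmod ((Q j 0 T - ?u j) * exp (\<i> * of_real (k j * x))))"
      by (rule norm_sum)
    also have "\<dots> = (\<Sum>j<n. cmod (Q j 0 T - ?u j))"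
      by (simp add: norm_mult norm_exp_eq_Re)
    also have "\<dots> \<le> (\<Sum>j<n. C j * \<tau>)"
      using C Q that by (intro sum_mono) auto
    finally show ?thesis
      by (simp add: sum_distrib_right)
  qed
  then show ?thesis
    by (intro exI[of _ "\<Sum>j<n. C j"] exI[of _ 1]) auto
qed

end
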